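(* Suppose that OnlinePacker (described in the context) has packed n horizontal parallelograms of height 1 and width at most 1. If the total area of the pieces is at least 1, the resulting packing has density Ω(n^{1-log 3}/log n), where log is base 2.
   Context: Setting: online translational strip packing. The strip is a horizontal strip of height 1, bounded on the left by a vertical segment and unbounded to the right. Pieces arrive one at a time, each must be placed by a translation only, interior-disjoint from previously placed pieces, before the next piece is revealed. The occupied part of the strip is the part from its left end to the vertical line through the rightmost point of a placed piece; density is total piece area divided by the area of the occupied part. Here all pieces are horizontal parallelograms (parallelograms with a pair of horizontal edges) of height 1 and width at most 1. Box types: these form an infinite ternary tree. The root, the basic box type, is a 2 x 1 rectangle. A d-dimensional box type is a vector [x_1,...,x_d] in {-1,0,+1}^d and is a horizontal parallelogram of height 1. Given type T with bottom edge b and top edge t, split b into three equal consecutive segments b_{-1}, b_0, b_{+1} and t likewise into t_{-1}, t_0, t_{+1}; the child type T ⊕ [x_{d+1}] is the parallelogram spanned by b_0 and t_{x_{d+1}}. Thus a d-dimensional type has base edges of length 2·3^{-d}. A box type T matches a piece P if P can be packed into T and area(T) ≤ 6·area(P). A type is suitable for P if it is an ancestor (including itself) of a type matching P. Algorithm OnlinePacker: each allocated box of type T contains either a single piece that T matches, or one, two or three boxes whose types are children of T. When a piece P arrives: if there is an allocated box B_1 whose type T_1 is suitable for P (with T_1,...,T_k the tree path from T_1 to a type T_k matching P) and B_1 has room for one more box of type T_2, choose such B_1 of maximum dimension; then for i = 1,...,k-1 allocate in B_i a new box B_{i+1} of type T_{i+1}, as far left in B_i as possible, and place P in B_k. Otherwise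 allocate a new basic box as far left in the strip as possible, call it B_1, and proceed the same way. A d-dimensional box is near-empty if exactly one (d+1)-dimensional box is allocated in it (near-empty boxes may be present here). *)

theory Defs
  imports "HOL-Analysis.Analysis"
begin

definition hpar :: "real \<Rightarrow> real \<Rightarrow> real \<Rightarrow> (real \<times> real) set" where
  "hpar a w s = {(x, y). 0 \<le> y \<and> y \<le> 1 \<and> a + s * y \<le> x \<and> x \<le> a + s * y + w}"

definition is_hpar1 :: "(real \<times> real) set \<Rightarrow> bool" where
  "is_hpar1 P \<longleftrightarrow> (\<exists>a b w s. w > 0 \<and>
     P = {(x, y). b \<le> y \<and> y \<le> b + 1 \<and> a + s * (y - b) \<le> x \<and> x \<le> a + s * (y - b) + w})"

definition width :: "(real \<times> real) set \<Rightarrow> real" where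
  "width P = (SUP p\<in>P. fst p) - (INF p\<in>P. fst p)"

definition area :: "(real \<times> real) set \<Rightarrow> real" where
  "area A = measure lebesgue A"

definition transl :: "real \<times> real \<Rightarrow> (real \<times> real) set \<Rightarrow> (real \<times> real) set" where
  "transl v A = (\<lambda>p. v + p) ` A"

definition int_disjoint :: "(real \<times> real) set \<Rightarrow> (real \<times> real) set \<Rightarrow> bool" where
  "int_disjoint A B \<longleftrightarrow> interior A \<inter> interior B = {}"

definition strip :: "(real \<times> real) set" where
  "strip = {(x, y). 0 \<le> x \<and> 0 \<le> y \<and> y \<le> 1}"

text \<open>A type is a list in {-1,0,1}^d.  Parameters (bottom-left x-coordinate, edge length,
  top offset) of the parallelogram representing it: the root is the 2 x 1 rectangle;
  the child T \<oplus> [x] is spanned by the middle third b_0 of the bottom edge and the third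
  t_x of the top edge.\<close>
definition child_params :: "real \<times> real \<times> real \<Rightarrow> int \<Rightarrow> real \<times> real \<times> real" where
  "child_params p x = (case p of (a, L, s) \<Rightarrow> (a + L / 3, L / 3, s + real_of_int x * L / 3))"

definition type_params :: "int list \<Rightarrow> real \<times> real \<times> real" where
  "type_params T = foldl child_params (0, 2, 0) T"

definition box_type :: "int list \<Rightarrow> (real \<times> real) set" where
  "box_type T = (case type_params T of (a, L, s) \<Rightarrow> hpar a L s)"

definition is_child_type :: "int list \<Rightarrow> int list \<Rightarrow> bool" where
  "is_child_type T T' \<longleftrightarrow> (\<exists>x\<in>{-1, 0, 1}. T' = T @ [x])"

definition valid_type :: "int list \<Rightarrow> bool" where
  "valid_type T \<longleftrightarrow> set T \<subseteq> {-1, 0, 1}"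

definition matches :: "int list \<Rightarrow> (real \<times> real) set \<Rightarrow> bool" where
  "matches T P \<longleftrightarrow> valid_type T \<and> (\<exists>v. transl v P \<subseteq> box_type T) \<and> area (box_type T) \<le> 6 * area P"

definition suitable :: "int list \<Rightarrow> (real \<times> real) set \<Rightarrow> bool" where
  "suitable T P \<longleftrightarrow> (\<exists>R. matches (T @ R) P)"

definition path_to_match :: "int list \<Rightarrow> int list list \<Rightarrow> (real \<times> real) set \<Rightarrow> bool" where
  "path_to_match T1 Ts P \<longleftrightarrow> Ts \<noteq> [] \<and> hd Ts = T1 \<and>
     (\<forall>j. Suc j < length Ts \<longrightarrow> is_child_type (Ts ! j) (Ts ! Suc j)) \<and> matches (last Ts) P"

text \<open>An allocated box: its type, the translation vector placing the canonical type
  parallelogram, and the index of its parent box (None for basic boxes).  A placed piece: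
  the translated piece and the index of the box containing it.\<close>
record pstate =
  boxes :: "(int list \<times> (real \<times> real) \<times> nat option) list"
  pcs :: "((real \<times> real) set \<times> nat) list"

definition empty_state :: pstate where
  "empty_state = \<lparr>boxes = [], pcs = []\<rparr>"

definition btype :: "pstate \<Rightarrow> nat \<Rightarrow> int list" where
  "btype S i = fst (boxes S ! i)"

definition bparent :: "pstate \<Rightarrow> nat \<Rightarrow> nat option" where
  "bparent S i = snd (snd (boxes S ! i))"

definition breg :: "pstate \<Rightarrow> nat \<Rightarrow> (real \<times> real) set" where
  "breg S i = transl (fst (snd (boxes S ! i))) (box_type (btype S i))"

definition has_piece :: "pstate \<Rightarrow> nat \<Rightarrow> bool" where
  "has_piece S i \<longleftrightarrow> (\<exists>Q. (Q, i) \<in> set (pcs S))"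

definition add_box :: "pstate \<Rightarrow> int list \<times> (real \<times> real) \<times> nat option \<Rightarrow> pstate" where
  "add_box S b = S\<lparr>boxes := boxes S @ [b]\<rparr>"

definition fits_child :: "pstate \<Rightarrow> nat \<Rightarrow> int list \<Rightarrow> real \<times> real \<Rightarrow> bool" where
  "fits_child S i T v \<longleftrightarrow> transl v (box_type T) \<subseteq> breg S i \<and>
     (\<forall>j < length (boxes S). bparent S j = Some i \<longrightarrow> int_disjoint (transl v (box_type T)) (breg S j))"

definition leftmost_child :: "pstate \<Rightarrow> nat \<Rightarrow> int list \<Rightarrow> real \<times> real \<Rightarrow> bool" where
  "leftmost_child S i T v \<longleftrightarrow> fits_child S i T v \<and> (\<forall>u. fits_child S i T u \<longrightarrow> fst v \<le> fst u)"

definition fits_basic :: "pstate \<Rightarrow> real \<times> real \<Rightarrow> bool" where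
  "fits_basic S v \<longleftrightarrow> transl v (box_type []) \<subseteq> strip \<and>
     (\<forall>j < length (boxes S). bparent S j = None \<longrightarrow> int_disjoint (transl v (box_type [])) (breg S j))"

definition leftmost_basic :: "pstate \<Rightarrow> real \<times> real \<Rightarrow> bool" where
  "leftmost_basic S v \<longleftrightarrow> fits_basic S v \<and> (\<forall>u. fits_basic S u \<longrightarrow> fst v \<le> fst u)"

inductive alloc_chain :: "pstate \<Rightarrow> nat \<Rightarrow> int list list \<Rightarrow> pstate \<Rightarrow> nat \<Rightarrow> bool" where
  nil: "alloc_chain S i [] S i"
| cons: "leftmost_child S i T v \<Longrightarrow>
         alloc_chain (add_box S (T, v, Some i)) (length (boxes S)) Ts S' j \<Longrightarrow>
         alloc_chain S i (T # Ts) S' j"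

definition place :: "pstate \<Rightarrow> nat \<Rightarrow> (real \<times> real) set \<Rightarrow> pstate \<Rightarrow> bool" where
  "place S j P S' \<longleftrightarrow> (\<exists>v. transl v P \<subseteq> breg S j \<and>
     S' = S\<lparr>pcs := pcs S @ [(transl v P, j)]\<rparr>)"

definition existing_ok :: "pstate \<Rightarrow> (real \<times> real) set \<Rightarrow> nat \<Rightarrow> int list list \<Rightarrow> bool" where
  "existing_ok S P i Ts \<longleftrightarrow> i < length (boxes S) \<and> path_to_match (btype S i) Ts P \<and>
     length Ts \<ge> 2 \<and> \<not> has_piece S i \<and> (\<exists>v. fits_child S i (Ts ! 1) v)"

text \<open>One step of OnlinePacker on the arriving piece P (ties are resolved arbitrarily).\<close>
definition op_step :: "pstate \<Rightarrow> (real \<times> real) set \<Rightarrow> pstate \<Rightarrow> bool" where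
  "op_step S P S' \<longleftrightarrow>
     (\<exists>i Ts. existing_ok S P i Ts \<and>
        (\<forall>i' Ts'. existing_ok S P i' Ts' \<longrightarrow> length (btype S i') \<le> length (btype S i)) \<and>
        (\<exists>S1 j. alloc_chain S i (tl Ts) S1 j \<and> place S1 j P S'))
   \<or> ((\<nexists>i Ts. existing_ok S P i Ts) \<and>
        (\<exists>v Ts S1 j. leftmost_basic S v \<and> path_to_match [] Ts P \<and>
           alloc_chain (add_box S ([], v, None)) (length (boxes S)) (tl Ts) S1 j \<and>
           place S1 j P S'))"

inductive packs :: "(real \<times> real) set list \<Rightarrow> pstate \<Rightarrow> bool" where
  init: "packs [] empty_state"
| step: "packs ps S \<Longrightarrow> op_step S P S' \<Longrightarrow> packs (ps @ [P]) S'"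

definition placed :: "pstate \<Rightarrow> (real \<times> real) set list" where
  "placed S = map fst (pcs S)"

definition occ_right :: "pstate \<Rightarrow> real" where
  "occ_right S = Max ((\<lambda>Q. SUP p\<in>Q. fst p) ` set (placed S))"

definition occupied :: "pstate \<Rightarrow> (real \<times> real) set" where
  "occupied S = {(x, y). 0 \<le> x \<and> x \<le> occ_right S \<and> 0 \<le> y \<and> y \<le> 1}"

definition pack_density :: "pstate \<Rightarrow> real" where
  "pack_density S = sum_list (map area (placed S)) / area (occupied S)"

end

(*
  Sort the boxes of OnlinePacker by their level, the dimension of their type. Every box holds a
  piece or has children. Leftmost allocation leaves room in a near-empty box for a sibling of its
  only child, and the packer prefers suitable boxes of maximal dimension; hence the only children
  of distinct near-empty boxes have distinct types, and level k carries at most 3^(k+1)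
  near-empty boxes. With N_k boxes and L_k pieces on level k this gives
  2 N_k <= N_(k+1) + 2 L_k + 3^(k+1) and N_k <= N_(k+1) + L_k, so that
  N_0 <= N_K / 2^K + sum_(k<K) (L_k / 2^k + (3/2)^(k+1)), while N_K <= n.
  A piece in a box on level k has area at least 3^(-k) / 3, so for the total area A we get
  sum_(k<K) L_k / 2^k <= (3/2)^K sum_(k<K) L_k / 3^k <= 3 A (3/2)^K.
  Taking K = ceil (log n) yields N_0 = O(A n^(log 3 - 1)),
  and the occupied length is at most 2 N_0. Hence the density is at least n^(1 - log 3) / 20.
*)

theory Submission
  imports Defs
begin

section \<open>Horizontal parallelograms\<close>

lemma closed_hpar: "closed (hpar a w s)"
proof -
  have "hpar a w s = {p. 0 \<le> snd p} \<inter> {p. snd p \<le> 1} \<inter> {p. a + s * snd p \<le> fst p}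
      \<inter> {p. fst p \<le> a + s * snd p + w}"
    by (auto simp: hpar_def)
  moreover have "closed \<dots>"
    by (intro closed_Int closed_Collect_le continuous_intros)
  ultimately show ?thesis by simp
qed

lemma area_hpar:
  assumes "w \<ge> 0"
  shows "area (hpar a w s) = w"
proof -
  let ?H = "hpar a w s"
  have borel: "?H \<in> sets borel"
    using closed_hpar by (simp add: borel_closed)
  have slice: "emeasure lborel ((\<lambda>x. (x, y)) -` ?H) = ennreal w * indicator {0..1} y" for y :: real
  proof (cases "0 \<le> y \<and> y \<le> 1")
    case True
    then have "(\<lambda>x. (x, y)) -` ?H = {a + s * y .. a + s * y + w}" by (auto simp: hpar_def)
    then show ?thesis using True assms by simp
  next
    case False
    then have "(\<lambda>x. (x, y)) -` ?H = {}" by (auto simp: hpar_def)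
    then show ?thesis using False by simp
  qed
  have "emeasure lborel ?H = emeasure (lborel \<Otimes>\<^sub>M lborel) ?H"
    by (simp add: lborel_prod)
  also have "\<dots> = (\<integral>\<^sup>+y. emeasure lborel ((\<lambda>x. (x, y)) -` ?H) \<partial>lborel)"
  proof (rule lborel_pair.emeasure_pair_measure_alt2)
    show "?H \<in> sets (lborel \<Otimes>\<^sub>M lborel)"
      unfolding lborel_prod using borel by simp
  qed
  also have "\<dots> = ennreal w"
    by (simp add: slice nn_integral_cmult)
  finally have "measure lborel ?H = w"
    using assms by (simp add: measure_def)
  then show ?thesis
    unfolding area_def using borel by simp
qed

definition hpar_at :: "real \<Rightarrow> real \<Rightarrow> real \<Rightarrow> real \<Rightarrow> (real \<times> real) set" where
  "hpar_at a b w s = {(x, y). b \<le> y \<and> y \<le> b + 1 \<and> a + s * (y - b) \<le> x \<and> x \<le> a + s * (y - b) + w}"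

lemma is_hpar1_iff: "is_hpar1 P \<longleftrightarrow> (\<exists>a b w s. w > 0 \<and> P = hpar_at a b w s)"
  unfolding is_hpar1_def hpar_at_def ..

lemma transl_eq_vimage: "transl u A = (\<lambda>p. p - u) -` A"
  unfolding transl_def by (force simp: image_iff algebra_simps)

lemma transl_hpar: "transl u (hpar a w s) = hpar_at (a + fst u) (snd u) w s"
  by (cases u) (auto simp: transl_eq_vimage hpar_def hpar_at_def algebra_simps)

lemma hpar_at_subset:
  assumes "a2 \<le> a1" "a2 + s2 \<le> a1 + s1" "a1 + w1 \<le> a2 + w2" "a1 + s1 + w1 \<le> a2 + s2 + w2"
  shows "hpar_at a1 b w1 s1 \<subseteq> hpar_at a2 b w2 s2"
proof safe
  fix x y assume xy: "(x, y) \<in> hpar_at a1 b w1 s1"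
  define t where "t = y - b"
  have t: "0 \<le> t" "t \<le> 1" using xy by (auto simp: hpar_at_def t_def)
  \<comment> \<open>the edges are affine in \<open>t\<close>: comparing them at \<open>t = 0\<close> and \<open>t = 1\<close> suffices\<close>
  have "0 \<le> (1 - t) * (a1 - a2) + t * ((a1 + s1) - (a2 + s2))"
    "0 \<le> (1 - t) * ((a2 + w2) - (a1 + w1)) + t * ((a2 + s2 + w2) - (a1 + s1 + w1))"
    using t assms by (intro add_nonneg_nonneg mult_nonneg_nonneg; simp)+
  then have "a2 + s2 * t \<le> a1 + s1 * t" "a1 + s1 * t + w1 \<le> a2 + s2 * t + w2"
    by (simp_all add: algebra_simps)
  then show "(x, y) \<in> hpar_at a2 b w2 s2"
    using xy by (auto simp: hpar_at_def t_def)
qed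

lemma hpar_at_subsetD:
  assumes "w1 \<ge> 0" "hpar_at a1 b1 w1 s1 \<subseteq> hpar_at a2 b2 w2 s2"
  shows "b1 = b2" "a2 \<le> a1" "a2 + s2 \<le> a1 + s1" "a1 + w1 \<le> a2 + w2" "a1 + s1 + w1 \<le> a2 + s2 + w2"
proof -
  have corners: "(a1, b1) \<in> hpar_at a2 b2 w2 s2" "(a1 + w1, b1) \<in> hpar_at a2 b2 w2 s2"
    "(a1 + s1, b1 + 1) \<in> hpar_at a2 b2 w2 s2" "(a1 + s1 + w1, b1 + 1) \<in> hpar_at a2 b2 w2 s2"
    by (rule subsetD[OF assms(2)]; use assms(1) in \<open>simp add: hpar_at_def\<close>)+
  then show "b1 = b2"
    by (auto simp: hpar_at_def)
  with corners show "a2 \<le> a1" "a2 + s2 \<le> a1 + s1" "a1 + w1 \<le> a2 + w2" "a1 + s1 + w1 \<le> a2 + s2 + w2"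
    by (auto simp: hpar_at_def)
qed

lemma int_disjoint_commute: "int_disjoint A B \<longleftrightarrow> int_disjoint B A"
  unfolding int_disjoint_def by blast

lemma int_disjoint_if_separated:
  assumes A: "A \<subseteq> {p. fst p - s * snd p \<le> c}" and B: "B \<subseteq> {p. fst p - s * snd p \<ge> c}"
  shows "int_disjoint A B"
proof (rule ccontr)
  assume "\<not> int_disjoint A B"
  then obtain z where z: "z \<in> interior A \<inter> interior B"
    unfolding int_disjoint_def by blast
  then obtain e where e: "e > 0" "ball z e \<subseteq> interior A \<inter> interior B"
    using open_contains_ball[of "interior A \<inter> interior B"] by blast
  obtain x y where xy: "z = (x, y)" by (cases z)
  have "(x + e / 2, y) \<in> ball z e"
    using e xy by (simp add: dist_Pair_Pair dist_real_def)
  then have "(x + e / 2, y) \<in> A"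
    using e(2) interior_subset by blast
  moreover have "z \<in> B"
    using z interior_subset by blast
  ultimately show False
    using A B xy e(1) by force
qed

lemma int_disjoint_hpar_at_shift:
  assumes "a + w \<le> a'"
  shows "int_disjoint (hpar_at a b w s) (hpar_at a' b w' s)"
  by (rule int_disjoint_if_separated[where s = s and c = "a + w - s * b"])
    (use assms in \<open>auto simp: hpar_at_def algebra_simps\<close>)

lemma type_params_snoc: "type_params (T @ [x]) = child_params (type_params T) x"
  by (simp add: type_params_def)

lemma edge_type_params: "fst (snd (type_params T)) = 2 / 3 ^ length T"
proof (induction T rule: rev_induct)
  case Nil
  then show ?case by (simp add: type_params_def)
next
  case (snoc x T)
  then show ?case
    by (cases "type_params T") (simp add: type_params_snoc child_params_def)
qed

lemma area_box_type: "area (box_type T) = 2 / 3 ^ length T"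
  using edge_type_params[of T]
  by (cases "type_params T") (simp add: box_type_def area_hpar)

section \<open>Allocating boxes\<close>

lemma add_box_simps [simp]:
  "boxes (add_box S b) = boxes S @ [b]" "pcs (add_box S b) = pcs S"
  by (simp_all add: add_box_def)

lemma box_fields_append:
  assumes "boxes S' = boxes S @ zs" "i < length (boxes S)"
  shows "btype S' i = btype S i" "bparent S' i = bparent S i" "breg S' i = breg S i"
  using assms by (simp_all add: btype_def bparent_def breg_def nth_append)

lemma add_box_old:
  assumes "i < length (boxes S)"
  shows "btype (add_box S b) i = btype S i" "bparent (add_box S b) i = bparent S i"
    "breg (add_box S b) i = breg S i"
  using box_fields_append[of "add_box S b" S "[b]" i] assms by simp_all

lemma add_box_new:
  "btype (add_box S b) (length (boxes S)) = fst b"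
  "bparent (add_box S b) (length (boxes S)) = snd (snd b)"
  "breg (add_box S b) (length (boxes S)) = transl (fst (snd b)) (box_type (fst b))"
  by (simp_all add: btype_def bparent_def breg_def)

lemma has_piece_add_box [simp]: "has_piece (add_box S b) i = has_piece S i"
  by (simp add: has_piece_def)

definition children :: "pstate \<Rightarrow> nat \<Rightarrow> nat set" where
  "children S i = {c. c < length (boxes S) \<and> bparent S c = Some i}"

lemma finite_children [simp]: "finite (children S i)"
  by (simp add: children_def)

lemma children_less_length: "c \<in> children S i \<Longrightarrow> c < length (boxes S)"
  by (simp add: children_def)

lemma children_add_box:
  "children (add_box S b) i =
     children S i \<union> (if snd (snd b) = Some i then {length (boxes S)} else {})"
  by (auto simp: children_def less_Suc_eq add_box_old add_box_new)

lemma fits_child_iff: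
  "fits_child S i T v \<longleftrightarrow> transl v (box_type T) \<subseteq> breg S i \<and>
     (\<forall>c\<in>children S i. int_disjoint (transl v (box_type T)) (breg S c))"
  by (auto simp: fits_child_def children_def)

lemma fits_child_add_box:
  assumes "i < length (boxes S)" "snd (snd b) \<noteq> Some i"
  shows "fits_child (add_box S b) i T u \<longleftrightarrow> fits_child S i T u"
proof -
  have "children (add_box S b) i = children S i"
    using assms(2) by (simp add: children_add_box)
  moreover have "breg (add_box S b) c = breg S c" if "c \<in> children S i" for c
    using that by (simp add: children_def add_box_old)
  ultimately show ?thesis
    using assms(1) by (simp add: fits_child_iff add_box_old)
qed

text \<open>The leftmost position pushes a child against the left side of its parent. As the base of
  the child is a third of the parent's, its translate by that third still fits into the parent,
  and it meets the first child only along an edge.\<close>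

lemma hpar_at_leftmost_third:
  assumes L: "0 < L" and x: "x \<in> {-1, 0, 1}"
    and inside: "hpar_at c b' (L / 3) (s + x * L / 3) \<subseteq> hpar_at a b L s"
    and leftmost: "\<And>c'. hpar_at c' b (L / 3) (s + x * L / 3) \<subseteq> hpar_at a b L s \<Longrightarrow> c \<le> c'"
  shows "b' = b" "hpar_at (c + L / 3) b (L / 3) (s + x * L / 3) \<subseteq> hpar_at a b L s"
proof -
  note corners = hpar_at_subsetD[OF _ inside]
  show "b' = b"
    using corners(1) L by simp
  define c' where "c' = a + (if x = -1 then L / 3 else 0)"
  have "hpar_at c' b (L / 3) (s + x * L / 3) \<subseteq> hpar_at a b L s"
    by (rule hpar_at_subset) (use L x in \<open>auto simp: c'_def\<close>)
  then have "c \<le> c'"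
    by (rule leftmost)
  then show "hpar_at (c + L / 3) b (L / 3) (s + x * L / 3) \<subseteq> hpar_at a b L s"
    using corners(2,3) L x by (intro hpar_at_subset) (auto simp: c'_def)
qed

lemma leftmost_child_leaves_room:
  assumes lm: "leftmost_child S i T v" and T: "T = btype S i @ [x]" "x \<in> {-1, 0, 1}"
    and i: "i < length (boxes S)" and no_children: "children S i = {}"
  shows "\<exists>u. fits_child (add_box S (T, v, Some i)) i T u"
proof -
  obtain a L s where tp: "type_params (btype S i) = (a, L, s)"
    by (cases "type_params (btype S i)")
  define t where "t = fst (snd (boxes S ! i))"
  define s' where "s' = s + real_of_int x * L / 3"
  have L: "L > 0"
    using edge_type_params[of "btype S i"] tp by simp
  have x: "real_of_int x \<in> {-1, 0, 1}"
    using T(2) by auto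
  have parent: "breg S i = hpar_at (a + fst t) (snd t) L s"
    using tp by (simp add: breg_def box_type_def transl_hpar t_def)
  have child: "transl u (box_type T) = hpar_at (a + L / 3 + fst u) (snd u) (L / 3) s'" for u
    using tp T by (simp add: box_type_def type_params_snoc child_params_def transl_hpar s'_def)
  have fits: "fits_child S i T u \<longleftrightarrow> transl u (box_type T) \<subseteq> breg S i" for u
    using no_children by (simp add: fits_child_iff)
  let ?c = "a + L / 3 + fst v"
  have "fits_child S i T (c' - a - L / 3, snd t)"
    if "hpar_at c' (snd t) (L / 3) s' \<subseteq> breg S i" for c'
    using that by (simp add: fits child)
  then have "?c \<le> c'" if "hpar_at c' (snd t) (L / 3) s' \<subseteq> breg S i" for c'
    using lm that by (fastforce simp: leftmost_child_def)
  moreover have "hpar_at ?c (snd v) (L / 3) s' \<subseteq> breg S i"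
    using lm by (simp add: leftmost_child_def fits child)
  ultimately have "snd v = snd t" "hpar_at (?c + L / 3) (snd t) (L / 3) s' \<subseteq> breg S i"
    using hpar_at_leftmost_third[OF L x, of ?c "snd v" s "a + fst t" "snd t"]
    by (simp_all add: parent s'_def)
  moreover have
    "int_disjoint (hpar_at (?c + L / 3) (snd t) (L / 3) s') (hpar_at ?c (snd t) (L / 3) s')"
    using int_disjoint_hpar_at_shift int_disjoint_commute by blast
  ultimately have "fits_child (add_box S (T, v, Some i)) i T (fst v + L / 3, snd t)"
    using no_children i
    by (simp add: fits_child_iff children_add_box add_box_old add_box_new child add.assoc)
  then show ?thesis ..
qed

definition forest_wf :: "pstate \<Rightarrow> bool" where
  "forest_wf S \<longleftrightarrow> (\<forall>i < length (boxes S). valid_type (btype S i) \<and>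
     (case bparent S i of
        None \<Rightarrow> btype S i = []
      | Some p \<Rightarrow> p < i \<and> is_child_type (btype S p) (btype S i)))"

definition num_basic :: "pstate \<Rightarrow> nat" where
  "num_basic S = length (filter (\<lambda>b. snd (snd b) = None) (boxes S))"

definition boxes_in_prefix :: "pstate \<Rightarrow> bool" where
  "boxes_in_prefix S \<longleftrightarrow>
     (\<forall>i < length (boxes S). breg S i \<subseteq> {p. 0 \<le> fst p \<and> fst p \<le> 2 * real (num_basic S)})"

text \<open>With room for a sibling, a near-empty box remains a candidate for later pieces that need its
  child's type; this is what bounds the number of near-empty boxes.\<close>

definition room_for_sibling :: "pstate \<Rightarrow> bool" where
  "room_for_sibling S \<longleftrightarrow> (\<forall>i c. children S i = {c} \<longrightarrow> (\<exists>u. fits_child S i (btype S c) u))"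

definition box_inv :: "pstate \<Rightarrow> bool" where
  "box_inv S \<longleftrightarrow> forest_wf S \<and> boxes_in_prefix S \<and> room_for_sibling S"

lemma forest_wf_valid: "forest_wf S \<Longrightarrow> i < length (boxes S) \<Longrightarrow> valid_type (btype S i)"
  by (simp add: forest_wf_def)

lemma forest_wf_root:
  "forest_wf S \<Longrightarrow> i < length (boxes S) \<Longrightarrow> bparent S i = None \<Longrightarrow> btype S i = []"
  by (auto simp: forest_wf_def)

lemma forest_wf_children:
  assumes "forest_wf S" "c \<in> children S p"
  shows "p < c" "c < length (boxes S)" "is_child_type (btype S p) (btype S c)"
  using assms by (auto simp: forest_wf_def children_def)

lemma valid_type_child: "valid_type T \<Longrightarrow> is_child_type T T' \<Longrightarrow> valid_type T'"
  by (auto simp: valid_type_def is_child_type_def)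

lemma all_less_length_add_box:
  "(\<forall>k < length (boxes (add_box S b)). P k) \<longleftrightarrow> (\<forall>k < length (boxes S). P k) \<and> P (length (boxes S))"
  by (auto simp: less_Suc_eq)

lemma forest_wf_add_box:
  assumes "forest_wf S" "valid_type T"
    and "case p of None \<Rightarrow> T = [] | Some i \<Rightarrow> i < length (boxes S) \<and> is_child_type (btype S i) T"
  shows "forest_wf (add_box S (T, v, p))"
  using assms unfolding forest_wf_def all_less_length_add_box
  by (auto simp: add_box_old add_box_new split: option.splits)

lemma num_basic_add_box [simp]:
  "num_basic (add_box S b) = num_basic S + (if snd (snd b) = None then 1 else 0)"
  by (simp add: num_basic_def)

lemma boxes_in_prefix_add_child:
  assumes "boxes_in_prefix S" "fits_child S i T v" "i < length (boxes S)"
  shows "boxes_in_prefix (add_box S (T, v, Some i))"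
proof -
  have "breg (add_box S (T, v, Some i)) (length (boxes S)) \<subseteq> breg S i"
    using assms(2) by (simp add: add_box_new fits_child_def)
  with assms(1,3) show ?thesis
    unfolding boxes_in_prefix_def all_less_length_add_box by (auto simp: add_box_old)
qed

lemma box_type_Nil: "box_type [] = hpar 0 2 0"
  by (simp add: box_type_def type_params_def)

lemma fits_basic_right_end:
  assumes "boxes_in_prefix S"
  shows "fits_basic S (2 * real (num_basic S), 0)"
proof -
  let ?M = "2 * real (num_basic S)"
  have new: "transl (?M, 0) (box_type []) = hpar_at ?M 0 2 0"
    by (simp add: box_type_Nil transl_hpar)
  have "int_disjoint (hpar_at ?M 0 2 0) (breg S j)" if "j < length (boxes S)" for j
    using assms that unfolding int_disjoint_commute[of "hpar_at ?M 0 2 0"]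
    by (intro int_disjoint_if_separated[where s = 0 and c = ?M])
      (auto simp: boxes_in_prefix_def hpar_at_def)
  then show ?thesis
    unfolding fits_basic_def new by (auto simp: hpar_at_def strip_def)
qed

lemma boxes_in_prefix_add_basic:
  assumes "boxes_in_prefix S" "leftmost_basic S v"
  shows "boxes_in_prefix (add_box S ([], v, None))"
proof -
  have "fst v \<le> 2 * real (num_basic S)"
    using assms fits_basic_right_end by (auto simp: leftmost_basic_def)
  moreover have "transl v (box_type []) \<subseteq> strip"
    using assms(2) by (simp add: leftmost_basic_def fits_basic_def)
  moreover have "transl v (box_type []) \<subseteq> {p. fst p \<le> fst v + 2}"
    by (auto simp: box_type_Nil transl_hpar hpar_at_def)
  ultimately have "breg (add_box S ([], v, None)) (length (boxes S)) \<subseteq>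
      {p. 0 \<le> fst p \<and> fst p \<le> 2 * real (num_basic (add_box S ([], v, None)))}"
    by (auto simp: add_box_new strip_def)
  moreover have "breg S k \<subseteq> {p. 0 \<le> fst p \<and> fst p \<le> 2 * real (num_basic (add_box S ([], v, None)))}"
    if "k < length (boxes S)" for k
    using assms(1) that by (fastforce simp: boxes_in_prefix_def)
  ultimately show ?thesis
    unfolding boxes_in_prefix_def all_less_length_add_box by (simp add: add_box_old)
qed

lemma room_for_sibling_add_child:
  assumes wf: "forest_wf S" and room: "room_for_sibling S" and lm: "leftmost_child S i T v"
    and i: "i < length (boxes S)" and T: "is_child_type (btype S i) T"
  shows "room_for_sibling (add_box S (T, v, Some i))"
  unfolding room_for_sibling_def
proof (intro allI impI)
  fix k c
  let ?S' = "add_box S (T, v, Some i)"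
  assume single: "children ?S' k = {c}"
  show "\<exists>u. fits_child ?S' k (btype ?S' c) u"
  proof (cases "k = i")
    case True
    with single have "c = length (boxes S)" "children S i = {}"
      by (auto simp: children_add_box dest: children_less_length)
    moreover obtain x where "x \<in> {-1, 0, 1}" "T = btype S i @ [x]"
      using T by (auto simp: is_child_type_def)
    ultimately show ?thesis
      using leftmost_child_leaves_room[OF lm _ _ i] True by (simp add: add_box_new)
  next
    case False
    with single have old: "children S k = {c}"
      by (simp add: children_add_box)
    then have "k < length (boxes S)" "c < length (boxes S)"
      using forest_wf_children[OF wf, of c k] by auto
    with old room False show ?thesis
      by (auto simp: room_for_sibling_def fits_child_add_box add_box_old)
  qed
qed

lemma room_for_sibling_add_basic:
  assumes wf: "forest_wf S" and room: "room_for_sibling S"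
  shows "room_for_sibling (add_box S ([], v, None))"
  unfolding room_for_sibling_def
proof (intro allI impI)
  fix k c
  assume "children (add_box S ([], v, None)) k = {c}"
  then have old: "children S k = {c}"
    by (simp add: children_add_box)
  then have "k < length (boxes S)" "c < length (boxes S)"
    using forest_wf_children[OF wf, of c k] by auto
  with old room
  show "\<exists>u. fits_child (add_box S ([], v, None)) k (btype (add_box S ([], v, None)) c) u"
    by (auto simp: room_for_sibling_def fits_child_add_box add_box_old)
qed

lemma box_inv_add_child:
  assumes "box_inv S" "leftmost_child S i T v" "i < length (boxes S)" "is_child_type (btype S i) T"
  shows "box_inv (add_box S (T, v, Some i))"
proof -
  have "valid_type T"
    using assms forest_wf_valid valid_type_child by (auto simp: box_inv_def)
  then show ?thesis
    using assms
    by (auto simp: box_inv_def leftmost_child_def forest_wf_add_box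
        intro: boxes_in_prefix_add_child room_for_sibling_add_child)
qed

lemma box_inv_add_basic:
  assumes "box_inv S" "leftmost_basic S v"
  shows "box_inv (add_box S ([], v, None))"
  using assms
  by (auto simp: box_inv_def valid_type_def forest_wf_add_box
      intro: boxes_in_prefix_add_basic room_for_sibling_add_basic)

lemma alloc_chain_box_inv:
  assumes "alloc_chain S i Ts S' j" "box_inv S" "i < length (boxes S)"
    "successively is_child_type (btype S i # Ts)"
  shows "box_inv S'"
  using assms
proof (induction rule: alloc_chain.induct)
  case (nil S i)
  then show ?case by simp
next
  case (cons S i T v Ts S' j)
  then have "box_inv (add_box S (T, v, Some i))"
    by (intro box_inv_add_child) auto
  with cons show ?case
    by (simp add: add_box_new successively_Cons)
qed

lemma alloc_chain_shape:
  assumes "alloc_chain S i Ts S' j"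
  shows "\<exists>zs. boxes S' = boxes S @ zs \<and> pcs S' = pcs S \<and> length zs = length Ts \<and>
    (\<forall>l < length Ts. fst (zs ! l) = Ts ! l \<and>
       snd (snd (zs ! l)) = Some (if l = 0 then i else length (boxes S) + l - 1)) \<and>
    j = (if Ts = [] then i else length (boxes S) + length Ts - 1)"
  using assms
proof (induction rule: alloc_chain.induct)
  case (nil S i)
  then show ?case by simp
next
  case (cons S i T v Ts S' j)
  then obtain zs where zs: "boxes S' = boxes S @ [(T, v, Some i)] @ zs" "pcs S' = pcs S"
    "length zs = length Ts"
    "\<forall>l < length Ts. fst (zs ! l) = Ts ! l \<and>
       snd (snd (zs ! l)) = Some (if l = 0 then length (boxes S) else length (boxes S) + l)"
    "j = (if Ts = [] then length (boxes S) else length (boxes S) + length Ts)"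
    by auto
  then show ?case
    by (intro exI[of _ "(T, v, Some i) # zs"]) (auto simp: nth_Cons' less_Suc_eq_0_disj)
qed

lemma path_to_match_iff:
  "path_to_match T1 Ts P \<longleftrightarrow>
     Ts \<noteq> [] \<and> hd Ts = T1 \<and> successively is_child_type Ts \<and> matches (last Ts) P"
  by (simp add: path_to_match_def successively_conv_nth)

lemma path_to_match_Cons: "path_to_match T1 Ts P \<Longrightarrow> Ts = T1 # tl Ts"
  by (metis list.collapse path_to_match_iff)

lemma length_nth_successively_child:
  assumes "successively is_child_type Ts" "l < length Ts"
  shows "length (Ts ! l) = length (hd Ts) + l"
  using assms(2)
proof (induction l)
  case 0
  then show ?case by (simp add: hd_conv_nth)
next
  case (Suc l)
  then have "is_child_type (Ts ! l) (Ts ! Suc l)"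
    using assms(1) successively_nth by blast
  with Suc show ?case
    by (auto simp: is_child_type_def)
qed

lemma path_to_match_drop:
  assumes "path_to_match T1 Ts P" "l < length Ts"
  shows "path_to_match (Ts ! l) (drop l Ts) P"
proof -
  have "successively is_child_type (drop l Ts)"
    using assms(1) by (auto simp: path_to_match_iff successively_conv_nth)
  then show ?thesis
    using assms by (simp add: path_to_match_iff hd_drop_conv_nth last_drop)
qed

lemma existing_ok_drop:
  assumes "i < length (boxes S)" "path_to_match T1 Ts P" "Suc l < length Ts"
    "btype S i = Ts ! l" "\<not> has_piece S i" "fits_child S i (Ts ! Suc l) u"
  shows "existing_ok S P i (drop l Ts)"
  using assms path_to_match_drop[OF assms(2), of l]
  unfolding existing_ok_def by (intro conjI exI[of _ u]) simp_all

section \<open>Invariants of OnlinePacker\<close>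

definition piece_in_box :: "pstate \<Rightarrow> (real \<times> real) set \<Rightarrow> (real \<times> real) set \<times> nat \<Rightarrow> bool" where
  "piece_in_box S P q \<longleftrightarrow> (\<exists>v. fst q = transl v P) \<and> snd q < length (boxes S) \<and>
     fst q \<subseteq> breg S (snd q) \<and> area (box_type (btype S (snd q))) \<le> 6 * area P"

definition pieces_in_boxes :: "(real \<times> real) set list \<Rightarrow> pstate \<Rightarrow> bool" where
  "pieces_in_boxes ps S \<longleftrightarrow> list_all2 (piece_in_box S) ps (pcs S)"

definition no_empty_box :: "pstate \<Rightarrow> bool" where
  "no_empty_box S \<longleftrightarrow> (\<forall>i < length (boxes S). has_piece S i \<or> children S i \<noteq> {})"

definition piece_boxes_childless :: "pstate \<Rightarrow> bool" where
  "piece_boxes_childless S \<longleftrightarrow> (\<forall>i. has_piece S i \<longrightarrow> children S i = {})"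

definition near_empty_types_distinct :: "pstate \<Rightarrow> bool" where
  "near_empty_types_distinct S \<longleftrightarrow>
     (\<forall>i i' c c'. children S i = {c} \<longrightarrow> children S i' = {c'} \<longrightarrow> btype S c = btype S c' \<longrightarrow> i = i')"

definition packer_inv :: "(real \<times> real) set list \<Rightarrow> pstate \<Rightarrow> bool" where
  "packer_inv ps S \<longleftrightarrow> box_inv S \<and> pieces_in_boxes ps S \<and> no_empty_box S \<and>
     piece_boxes_childless S \<and> near_empty_types_distinct S"

lemma piece_in_box_append:
  "boxes S' = boxes S @ zs \<Longrightarrow> piece_in_box S P q \<Longrightarrow> piece_in_box S' P q"
  by (auto simp: piece_in_box_def box_fields_append)

lemma pieces_in_boxes_append:
  "boxes S' = boxes S @ zs \<Longrightarrow> pcs S' = pcs S \<Longrightarrow> pieces_in_boxes ps S \<Longrightarrow> pieces_in_boxes ps S'"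
  unfolding pieces_in_boxes_def by (auto elim: list_all2_mono intro: piece_in_box_append)

lemma pieces_in_boxesD:
  assumes "pieces_in_boxes ps S" "q \<in> set (pcs S)"
  obtains P where "P \<in> set ps" "piece_in_box S P q"
  using assms unfolding pieces_in_boxes_def
  by (metis in_set_conv_nth list_all2_conv_all_nth)

lemma has_piece_less_length:
  "pieces_in_boxes ps S \<Longrightarrow> has_piece S i \<Longrightarrow> i < length (boxes S)"
  unfolding has_piece_def by (auto elim: pieces_in_boxesD simp: piece_in_box_def)

lemma box_inv_cong:
  assumes "boxes S' = boxes S"
  shows "box_inv S' = box_inv S"
proof -
  have "btype S' = btype S" "bparent S' = bparent S" "breg S' = breg S" "children S' = children S"
    "num_basic S' = num_basic S" "fits_child S' = fits_child S"
    using assms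
    by (simp_all add: fun_eq_iff btype_def bparent_def breg_def children_def num_basic_def
        fits_child_def)
  then show ?thesis
    by (simp only: box_inv_def forest_wf_def boxes_in_prefix_def room_for_sibling_def assms)
qed

lemma child_type_eq_parent:
  "is_child_type T1 T \<Longrightarrow> is_child_type T2 T \<Longrightarrow> T1 = T2"
  by (auto simp: is_child_type_def)

locale alloc_step =
  fixes S0 :: pstate and i0 :: nat and Ts :: "int list list" and P :: "(real \<times> real) set"
    and S1 :: pstate and j :: nat and S' :: pstate
  assumes i0: "i0 < length (boxes S0)"
    and path: "path_to_match (btype S0 i0) Ts P"
    and chain: "alloc_chain S0 i0 (tl Ts) S1 j"
    and placed: "place S1 j P S'"
begin

abbreviation "m0 \<equiv> length (boxes S0)"
abbreviation "r \<equiv> length (tl Ts)"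

lemma shape:
  obtains zs v where "boxes S' = boxes S0 @ zs" "length zs = r"
    "\<And>l. l < r \<Longrightarrow> fst (zs ! l) = Ts ! Suc l"
    "\<And>l. l < r \<Longrightarrow> snd (snd (zs ! l)) = Some (if l = 0 then i0 else m0 + l - 1)"
    "j = (if r = 0 then i0 else m0 + r - 1)"
    "pcs S' = pcs S0 @ [(transl v P, j)]" "transl v P \<subseteq> breg S' j"
proof -
  obtain zs where zs: "boxes S1 = boxes S0 @ zs" "pcs S1 = pcs S0" "length zs = r"
    "\<forall>l < r. fst (zs ! l) = tl Ts ! l \<and>
       snd (snd (zs ! l)) = Some (if l = 0 then i0 else m0 + l - 1)"
    "j = (if tl Ts = [] then i0 else m0 + r - 1)"
    using alloc_chain_shape[OF chain] by blast
  obtain v where v: "transl v P \<subseteq> breg S1 j" "S' = S1\<lparr>pcs := pcs S1 @ [(transl v P, j)]\<rparr>"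
    using placed unfolding place_def by blast
  have tl_nth: "tl Ts ! l = Ts ! Suc l" for l
    by (subst path_to_match_Cons[OF path]) simp
  have boxes: "boxes S' = boxes S1" and breg: "breg S' = breg S1"
    using v(2) by (simp_all add: fun_eq_iff breg_def btype_def)
  have r0: "tl Ts = [] \<longleftrightarrow> r = 0"
    by (rule length_0_conv[symmetric])
  show thesis
  proof (rule that[of zs v])
    show "j = (if r = 0 then i0 else m0 + r - 1)"
      using zs(5) unfolding r0 .
  qed (use zs v boxes breg tl_nth in auto)
qed

lemma length_boxes: "length (boxes S') = m0 + r"
  by (rule shape) simp

lemma old_box:
  assumes "k < m0"
  shows "btype S' k = btype S0 k" "bparent S' k = bparent S0 k"
  by (rule shape, use assms in \<open>simp add: box_fields_append\<close>)+

lemma new_box: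
  assumes "l < r"
  shows "btype S' (m0 + l) = Ts ! Suc l"
    "bparent S' (m0 + l) = Some (if l = 0 then i0 else m0 + l - 1)"
  by (rule shape, use assms in \<open>simp add: btype_def bparent_def nth_append\<close>)+

lemma j_eq: "j = (if r = 0 then i0 else m0 + r - 1)"
  by (rule shape) simp

lemma has_piece_iff: "has_piece S' k \<longleftrightarrow> has_piece S0 k \<or> k = j"
  by (rule shape) (auto simp: has_piece_def)

lemma mem_children:
  "c \<in> children S' k \<longleftrightarrow>
     c \<in> children S0 k \<or> (\<exists>l < r. c = m0 + l \<and> k = (if l = 0 then i0 else m0 + l - 1))"
proof (cases "c < m0")
  case True
  then show ?thesis
    by (auto simp: children_def length_boxes old_box)
next
  case False
  then obtain l where c: "c = m0 + l"
    using le_Suc_ex not_less by blast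
  show ?thesis
  proof (cases "l < r")
    case True
    then show ?thesis
      using new_box(2)[OF True] c by (auto simp: children_def length_boxes)
  qed (use c in \<open>auto simp: children_def length_boxes\<close>)
qed

lemma children_old:
  "k < m0 \<Longrightarrow> children S' k = children S0 k \<union> (if k = i0 \<and> r \<noteq> 0 then {m0} else {})"
  using i0 by (auto simp: mem_children split: if_splits)

lemma children_new:
  assumes wf: "forest_wf S0" and l: "l < r"
  shows "children S' (m0 + l) = (if Suc l < r then {m0 + Suc l} else {})"
proof -
  have "children S0 (m0 + l) = {}"
  proof -
    have False if "c \<in> children S0 (m0 + l)" for c
      using forest_wf_children(1,2)[OF wf that] by simp
    then show ?thesis by blast
  qed
  then show ?thesis
    using i0 l by (auto simp: mem_children split: if_splits)
qed

lemma box_inv_preserved: "box_inv S0 \<Longrightarrow> box_inv S'"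
proof -
  assume "box_inv S0"
  moreover have "successively is_child_type (btype S0 i0 # tl Ts)"
    using path path_to_match_Cons[OF path] by (metis path_to_match_iff)
  ultimately have "box_inv S1"
    using alloc_chain_box_inv[OF chain _ i0] by blast
  moreover have "boxes S' = boxes S1"
    using placed by (auto simp: place_def)
  ultimately show ?thesis
    using box_inv_cong by blast
qed

lemma j_less: "j < length (boxes S')"
  using i0 by (cases "r = 0") (simp_all add: j_eq length_boxes)

lemma btype_j: "btype S' j = last Ts"
proof (cases "r = 0")
  case True
  then show ?thesis
    using path_to_match_Cons[OF path] i0 by (metis j_eq last_ConsL length_0_conv old_box(1))
next
  case False
  then have "j = m0 + (r - 1)" "r - 1 < r" "Suc (r - 1) = r"
    by (simp_all add: j_eq)
  then have "btype S' j = Ts ! r"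
    by (metis new_box(1))
  then show ?thesis
    using path by (simp add: path_to_match_iff last_conv_nth)
qed

lemma pieces_in_boxes_preserved:
  assumes "pieces_in_boxes ps S0"
  shows "pieces_in_boxes (ps @ [P]) S'"
proof (rule shape)
  fix zs v
  assume boxes: "boxes S' = boxes S0 @ zs" and pcs: "pcs S' = pcs S0 @ [(transl v P, j)]"
    and inside: "transl v P \<subseteq> breg S' j"
  have "list_all2 (piece_in_box S') ps (pcs S0)"
    using assms piece_in_box_append[OF boxes]
    unfolding pieces_in_boxes_def by (auto elim: list_all2_mono)
  moreover have "area (box_type (last Ts)) \<le> 6 * area P"
    using path by (simp add: path_to_match_iff matches_def)
  then have "piece_in_box S' P (transl v P, j)"
    using inside j_less btype_j unfolding piece_in_box_def fst_conv snd_conv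
    by (intro conjI exI[of _ v]) simp_all
  ultimately show ?thesis
    unfolding pieces_in_boxes_def pcs by (simp add: list_all2_appendI)
qed

lemma no_empty_box_preserved:
  assumes used: "\<forall>k < m0. k \<noteq> i0 \<longrightarrow> has_piece S0 k \<or> children S0 k \<noteq> {}"
  shows "no_empty_box S'"
  unfolding no_empty_box_def
proof (intro allI impI)
  fix k
  assume "k < length (boxes S')"
  then consider "k < m0" "k \<noteq> i0" | "k = i0" | l where "l < r" "k = m0 + l"
    by (metis add_diff_inverse_nat length_boxes nat_add_left_cancel_less)
  then show "has_piece S' k \<or> children S' k \<noteq> {}"
  proof cases
    case 1
    with used show ?thesis
      by (auto simp: has_piece_iff children_old)
  next
    case 2
    then show ?thesis
      using i0 by (auto simp: has_piece_iff children_old j_eq)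
  next
    case (3 l)
    then show ?thesis
      using mem_children[of "m0 + Suc l" k] by (cases "Suc l < r") (auto simp: has_piece_iff j_eq)
  qed
qed

lemma piece_boxes_childless_preserved:
  assumes wf: "forest_wf S0" and pieces: "pieces_in_boxes ps S0"
    and childless: "piece_boxes_childless S0" and i0_free: "\<not> has_piece S0 i0"
    and leaf: "r = 0 \<Longrightarrow> children S0 i0 = {}"
  shows "piece_boxes_childless S'"
  unfolding piece_boxes_childless_def
proof (intro allI impI)
  fix k
  assume "has_piece S' k"
  then consider "has_piece S0 k" | "k = j"
    by (auto simp: has_piece_iff)
  then show "children S' k = {}"
  proof cases
    case 1
    then have "k < m0" "k \<noteq> i0" "children S0 k = {}"
      using has_piece_less_length[OF pieces] i0_free childless
      by (auto simp: piece_boxes_childless_def)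
    then show ?thesis
      by (simp add: children_old)
  next
    case 2
    show ?thesis
    proof (cases "r = 0")
      case True
      then show ?thesis
        using 2 leaf i0 by (simp add: j_eq children_old)
    next
      case False
      then show ?thesis
        using 2 children_new[OF wf, of "r - 1"] by (simp add: j_eq)
    qed
  qed
qed

lemma existing_ok_near_empty:
  assumes wf: "forest_wf S0" and room: "room_for_sibling S0"
    and childless: "piece_boxes_childless S0"
    and single: "children S0 i = {c}" and l: "Suc l < length Ts" and type: "btype S0 c = Ts ! Suc l"
  shows "existing_ok S0 P i (drop l Ts)"
proof -
  have c: "c \<in> children S0 i"
    using single by simp
  have "is_child_type (Ts ! l) (Ts ! Suc l)"
    using path l by (simp add: path_to_match_iff successively_nth)
  then have type_i: "btype S0 i = Ts ! l"
    using forest_wf_children(3)[OF wf c] type child_type_eq_parent by metis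
  have "\<not> has_piece S0 i"
    using childless single by (auto simp: piece_boxes_childless_def)
  moreover obtain u where "fits_child S0 i (Ts ! Suc l) u"
    using room single type unfolding room_for_sibling_def by metis
  moreover have "i < m0"
    using forest_wf_children(1,2)[OF wf c] by simp
  ultimately show ?thesis
    using existing_ok_drop[OF _ path l type_i] by blast
qed

lemma old_only_child:
  assumes wf: "forest_wf S0" and single: "children S' i = {c}" and c: "c < m0"
  shows "children S0 i = {c}" "i = i0 \<Longrightarrow> r = 0"
proof -
  have "c \<in> children S' i"
    using single by simp
  then have "c \<in> children S0 i"
    using c by (auto simp: mem_children)
  then have "i < m0"
    using forest_wf_children(1,2)[OF wf] by fastforce
  then show "children S0 i = {c}" "i = i0 \<Longrightarrow> r = 0"
    using single c by (auto simp: children_old split: if_splits)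
qed

lemma new_only_child:
  assumes single: "children S' i = {c}" and c: "\<not> c < m0"
  obtains l where "l < r" "c = m0 + l" "i = (if l = 0 then i0 else m0 + l - 1)"
    "btype S' c = Ts ! Suc l"
proof -
  have "c \<in> children S' i"
    using single by simp
  then obtain l where "l < r" "c = m0 + l" "i = (if l = 0 then i0 else m0 + l - 1)"
    using c children_less_length[of c S0 i] by (auto simp: mem_children)
  then show thesis
    using that new_box(1) by blast
qed

lemma only_child_types_new_old:
  assumes wf: "forest_wf S0" and room: "room_for_sibling S0"
    and childless: "piece_boxes_childless S0"
    and maximal: "\<forall>i l. i \<noteq> i0 \<longrightarrow> existing_ok S0 P i (drop l Ts) \<longrightarrow> l = 0 \<and> children S0 i0 \<noteq> {}"
    and single: "children S' i = {c}" "children S' i' = {c'}" and c: "\<not> c < m0" "c' < m0"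
  shows "btype S' c \<noteq> btype S' c'"
proof
  assume type: "btype S' c = btype S' c'"
  obtain l where l: "l < r" "c = m0 + l" "i = (if l = 0 then i0 else m0 + l - 1)"
    "btype S' c = Ts ! Suc l"
    using new_only_child[OF single(1) c(1)] by blast
  have "children S0 i' = {c'}" "i' \<noteq> i0"
    using old_only_child[OF wf single(2) c(2)] l(1) by auto
  moreover have "btype S0 c' = Ts ! Suc l"
    using type l(4) old_box(1)[OF c(2)] by simp
  ultimately have "existing_ok S0 P i' (drop l Ts)"
    using existing_ok_near_empty[OF wf room childless] l(1) by simp
  with maximal \<open>i' \<noteq> i0\<close> have "l = 0" "children S0 i0 \<noteq> {}"
    by blast+
  moreover have "r \<noteq> 0"
    using l(1) by simp
  then have "children S' i0 = insert m0 (children S0 i0)"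
    using i0 by (simp add: children_old)
  ultimately show False
    using single(1) l(3) children_less_length[of _ S0 i0] by auto
qed

lemma only_child_types_new_new:
  assumes single: "children S' i = {c}" "children S' i' = {c'}" and c: "\<not> c < m0" "\<not> c' < m0"
    and type: "btype S' c = btype S' c'"
  shows "i = i'"
proof -
  obtain l where l: "l < r" "i = (if l = 0 then i0 else m0 + l - 1)" "btype S' c = Ts ! Suc l"
    using new_only_child[OF single(1) c(1)] by blast
  obtain l' where l': "l' < r" "i' = (if l' = 0 then i0 else m0 + l' - 1)"
    "btype S' c' = Ts ! Suc l'"
    using new_only_child[OF single(2) c(2)] by blast
  have chain: "successively is_child_type Ts"
    using path by (simp add: path_to_match_iff)
  then have "length (Ts ! Suc l) = length (Ts ! Suc l')"
    using type l(3) l'(3) by simp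
  then have "l = l'"
    using length_nth_successively_child[OF chain] l(1) l'(1) by simp
  then show ?thesis
    using l(2) l'(2) by simp
qed

lemma near_empty_types_distinct_preserved:
  assumes wf: "forest_wf S0" and room: "room_for_sibling S0"
    and childless: "piece_boxes_childless S0" and distinct: "near_empty_types_distinct S0"
    and maximal: "\<forall>i l. i \<noteq> i0 \<longrightarrow> existing_ok S0 P i (drop l Ts) \<longrightarrow> l = 0 \<and> children S0 i0 \<noteq> {}"
  shows "near_empty_types_distinct S'"
  unfolding near_empty_types_distinct_def
proof (intro allI impI)
  fix i i' c c'
  assume single: "children S' i = {c}" "children S' i' = {c'}" and type: "btype S' c = btype S' c'"
  note new_old = only_child_types_new_old[OF wf room childless maximal]
  consider "c < m0" "c' < m0" | "\<not> c < m0" "c' < m0" | "c < m0" "\<not> c' < m0"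
    | "\<not> c < m0" "\<not> c' < m0"
    by blast
  then show "i = i'"
  proof cases
    case 1
    then show ?thesis
      using distinct old_only_child[OF wf] single type old_box(1)
      by (metis near_empty_types_distinct_def)
  next
    case 2
    then show ?thesis
      using new_old[OF single] type by blast
  next
    case 3
    then show ?thesis
      using new_old[OF single(2,1)] type by simp
  next
    case 4
    then show ?thesis
      using only_child_types_new_new[OF single] type by blast
  qed
qed

end

lemma existing_ok_drop_start:
  assumes "existing_ok S P i (drop l Ts)"
  shows "btype S i = Ts ! l" "l < length Ts"
proof -
  have "path_to_match (btype S i) (drop l Ts) P"
    using assms by (simp add: existing_ok_def)
  then show "l < length Ts" "btype S i = Ts ! l"
    by (auto simp: path_to_match_iff hd_drop_conv_nth)
qed

lemma existing_ok_drop_maximal: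
  assumes path: "path_to_match (btype S i) Ts P"
    and maximal: "\<forall>i' Ts'. existing_ok S P i' Ts' \<longrightarrow> length (btype S i') \<le> length (btype S i)"
    and ok: "existing_ok S P i' (drop l Ts)"
  shows "l = 0"
proof -
  have "btype S i' = Ts ! l" "l < length Ts"
    using existing_ok_drop_start[OF ok] by simp_all
  moreover have "length (btype S i') \<le> length (btype S i)"
    using maximal ok by blast
  ultimately show "l = 0"
    using length_nth_successively_child[of Ts l] path by (simp add: path_to_match_iff)
qed

lemma packer_inv_existing_step:
  assumes inv: "packer_inv ps S" and ok: "existing_ok S P i Ts"
    and maximal: "\<forall>i' Ts'. existing_ok S P i' Ts' \<longrightarrow> length (btype S i') \<le> length (btype S i)"
    and chain: "alloc_chain S i (tl Ts) S1 j" and placed: "place S1 j P S'"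
  shows "packer_inv (ps @ [P]) S'"
proof -
  have i: "i < length (boxes S)" and path: "path_to_match (btype S i) Ts P"
    and long: "2 \<le> length Ts" and free: "\<not> has_piece S i"
    using ok by (simp_all add: existing_ok_def)
  interpret alloc_step S i Ts P S1 j S'
    using i path chain placed by unfold_locales
  have "children S i \<noteq> {}"
    using inv i free by (auto simp: packer_inv_def no_empty_box_def)
  then have maximal': "l = 0 \<and> children S i \<noteq> {}" if "existing_ok S P i' (drop l Ts)" for i' l
    using existing_ok_drop_maximal[OF path maximal that] by blast
  have wf: "forest_wf S" and room: "room_for_sibling S"
    using inv by (simp_all add: packer_inv_def box_inv_def)
  show ?thesis
    unfolding packer_inv_def
  proof (intro conjI)
    show "box_inv S'"
      using inv by (intro box_inv_preserved) (simp add: packer_inv_def)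
    show "pieces_in_boxes (ps @ [P]) S'"
      using inv by (intro pieces_in_boxes_preserved) (simp add: packer_inv_def)
    show "no_empty_box S'"
      using inv by (intro no_empty_box_preserved) (simp add: packer_inv_def no_empty_box_def)
    show "piece_boxes_childless S'"
      using inv free long
      by (intro piece_boxes_childless_preserved) (auto simp: packer_inv_def box_inv_def)
    show "near_empty_types_distinct S'"
      using inv wf room maximal'
      by (intro near_empty_types_distinct_preserved) (auto simp: packer_inv_def)
  qed
qed

lemma existing_ok_add_basic:
  assumes "existing_ok (add_box S ([], v, None)) P i Ts" "i < length (boxes S)"
  shows "existing_ok S P i Ts"
  using assms by (simp add: existing_ok_def add_box_old fits_child_add_box)

lemma near_empty_types_distinct_add_basic:
  assumes distinct: "near_empty_types_distinct S"
  shows "near_empty_types_distinct (add_box S ([], v, None))"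
  unfolding near_empty_types_distinct_def
proof (intro allI impI)
  fix i i' c c'
  assume "children (add_box S ([], v, None)) i = {c}" "children (add_box S ([], v, None)) i' = {c'}"
    and type: "btype (add_box S ([], v, None)) c = btype (add_box S ([], v, None)) c'"
  then have single: "children S i = {c}" "children S i' = {c'}"
    by (simp_all add: children_add_box)
  then have "c < length (boxes S)" "c' < length (boxes S)"
    using children_less_length by blast+
  with type have "btype S c = btype S c'"
    by (simp add: add_box_old)
  with distinct single show "i = i'"
    by (simp add: near_empty_types_distinct_def)
qed

lemma packer_inv_basic_step:
  assumes inv: "packer_inv ps S" and none: "\<nexists>i Ts. existing_ok S P i Ts"
    and basic: "leftmost_basic S v" and path: "path_to_match [] Ts P"
    and chain: "alloc_chain (add_box S ([], v, None)) (length (boxes S)) (tl Ts) S1 j"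
    and placed: "place S1 j P S'"
  shows "packer_inv (ps @ [P]) S'"
proof -
  let ?S0 = "add_box S ([], v, None)" and ?m = "length (boxes S)"
  interpret alloc_step ?S0 ?m Ts P S1 j S'
    using path chain placed by unfold_locales (simp_all add: add_box_new)
  have wf: "forest_wf S" and pieces: "pieces_in_boxes ps S"
    using inv by (simp_all add: packer_inv_def box_inv_def)
  have children: "children ?S0 k = children S k" for k
    by (simp add: children_add_box)
  have free: "\<not> has_piece ?S0 ?m"
    using has_piece_less_length[OF pieces] by auto
  have leaf: "children ?S0 ?m = {}"
    using forest_wf_children(1,2)[OF wf] children by fastforce
  have "box_inv ?S0"
    using inv basic by (simp add: packer_inv_def box_inv_add_basic)
  moreover have "pieces_in_boxes ps ?S0"
    by (rule pieces_in_boxes_append[OF _ _ pieces]) simp_all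
  moreover have "piece_boxes_childless ?S0" "near_empty_types_distinct ?S0"
    using inv wf children
    by (simp_all add: packer_inv_def piece_boxes_childless_def near_empty_types_distinct_add_basic)
  moreover have "\<forall>k < ?m. has_piece ?S0 k \<or> children ?S0 k \<noteq> {}"
    using inv children by (simp add: packer_inv_def no_empty_box_def)
  moreover have False if "existing_ok ?S0 P i (drop l Ts)" "i \<noteq> ?m" for i l
  proof -
    have "i < ?m"
      using that by (auto simp: existing_ok_def)
    then show False
      using none existing_ok_add_basic[OF that(1)] by blast
  qed
  ultimately show ?thesis
    unfolding packer_inv_def box_inv_def
    using free leaf
    by (intro conjI box_inv_preserved[unfolded box_inv_def] pieces_in_boxes_preserved
        no_empty_box_preserved piece_boxes_childless_preserved near_empty_types_distinct_preserved)
      auto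
qed

lemma packer_inv_step: "packer_inv ps S \<Longrightarrow> op_step S P S' \<Longrightarrow> packer_inv (ps @ [P]) S'"
  unfolding op_step_def by (auto intro: packer_inv_existing_step packer_inv_basic_step)

lemma packs_packer_inv: "packs ps S \<Longrightarrow> packer_inv ps S"
proof (induction rule: packs.induct)
  case init
  then show ?case
    by (simp add: empty_state_def packer_inv_def box_inv_def forest_wf_def boxes_in_prefix_def
        room_for_sibling_def children_def pieces_in_boxes_def no_empty_box_def
        piece_boxes_childless_def near_empty_types_distinct_def)
next
  case (step ps S P S')
  then show ?case
    by (blast intro: packer_inv_step)
qed

section \<open>Counting boxes level by level\<close>

definition level :: "pstate \<Rightarrow> nat \<Rightarrow> nat" where
  "level S i = length (btype S i)"

definition boxes_at :: "pstate \<Rightarrow> nat \<Rightarrow> nat set" where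
  "boxes_at S k = {i. i < length (boxes S) \<and> level S i = k}"

definition pieces_at :: "pstate \<Rightarrow> nat \<Rightarrow> nat set" where
  "pieces_at S k = {n. n < length (pcs S) \<and> level S (snd (pcs S ! n)) = k}"

definition near_empty_at :: "pstate \<Rightarrow> nat \<Rightarrow> nat set" where
  "near_empty_at S k = {i \<in> boxes_at S k. card (children S i) = 1}"

lemma finite_boxes_at [simp]: "finite (boxes_at S k)"
  by (simp add: boxes_at_def)

lemma finite_pieces_at [simp]: "finite (pieces_at S k)"
  by (simp add: pieces_at_def)

lemma level_child: "forest_wf S \<Longrightarrow> c \<in> children S p \<Longrightarrow> level S c = Suc (level S p)"
  using forest_wf_children(3) by (fastforce simp: level_def is_child_type_def)

lemma card_boxes_at_Suc:
  assumes wf: "forest_wf S"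
  shows "card (boxes_at S (Suc k)) = (\<Sum>i\<in>boxes_at S k. card (children S i))"
proof -
  have "boxes_at S (Suc k) = (\<Union>i\<in>boxes_at S k. children S i)"
  proof safe
    fix c assume c: "c \<in> boxes_at S (Suc k)"
    then have "btype S c \<noteq> []"
      by (auto simp: boxes_at_def level_def)
    then obtain p where "bparent S c = Some p"
      using forest_wf_root[OF wf] c by (cases "bparent S c") (auto simp: boxes_at_def)
    then have pc: "c \<in> children S p"
      using c by (simp add: children_def boxes_at_def)
    moreover have "p \<in> boxes_at S k"
      using c level_child[OF wf pc] forest_wf_children(1,2)[OF wf pc] by (simp add: boxes_at_def)
    ultimately show "c \<in> (\<Union>i\<in>boxes_at S k. children S i)"
      by blast
  qed (auto simp: boxes_at_def children_def level_child[OF wf])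
  moreover have "children S i \<inter> children S i' = {}" if "i \<noteq> i'" for i i'
    using that by (auto simp: children_def)
  ultimately show ?thesis
    by (simp add: card_UN_disjoint)
qed

lemma card_piece_boxes_at:
  "card {i \<in> boxes_at S k. has_piece S i} \<le> card (pieces_at S k)"
proof -
  have "{i \<in> boxes_at S k. has_piece S i} \<subseteq> (\<lambda>n. snd (pcs S ! n)) ` pieces_at S k"
    by (force simp: boxes_at_def pieces_at_def has_piece_def in_set_conv_nth)
  then have "card {i \<in> boxes_at S k. has_piece S i} \<le> card ((\<lambda>n. snd (pcs S ! n)) ` pieces_at S k)"
    by (simp add: card_mono)
  also have "\<dots> \<le> card (pieces_at S k)"
    by (rule card_image_le) simp
  finally show ?thesis .
qed

lemma card_children_lower:
  assumes "no_empty_box S" "i < length (boxes S)"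
  shows "2 \<le> card (children S i) + 2 * of_bool (has_piece S i) + of_bool (card (children S i) = 1)"
    "1 \<le> card (children S i) + of_bool (has_piece S i)"
proof -
  have "has_piece S i \<or> 0 < card (children S i)"
    using assms by (simp add: no_empty_box_def card_gt_0_iff)
  then show
    "2 \<le> card (children S i) + 2 * of_bool (has_piece S i) + of_bool (card (children S i) = 1)"
    "1 \<le> card (children S i) + of_bool (has_piece S i)"
    by (auto simp: of_bool_def)
qed

lemma boxes_at_recurrence:
  assumes inv: "packer_inv ps S"
  shows "2 * card (boxes_at S k) \<le>
      card (boxes_at S (Suc k)) + 2 * card (pieces_at S k) + card (near_empty_at S k)"
    "card (boxes_at S k) \<le> card (boxes_at S (Suc k)) + card (pieces_at S k)"
proof -
  have wf: "forest_wf S" and used: "no_empty_box S"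
    using inv by (simp_all add: packer_inv_def box_inv_def)
  let ?B = "boxes_at S k"
  let ?H = "card {i \<in> ?B. has_piece S i}"
  have "2 * card ?B = (\<Sum>i\<in>?B. 2)"
    by simp
  also have "\<dots> \<le> (\<Sum>i\<in>?B. card (children S i) + 2 * of_bool (has_piece S i)
      + of_bool (card (children S i) = 1))"
    using card_children_lower(1)[OF used] by (intro sum_mono) (simp add: boxes_at_def)
  also have "\<dots> = card (boxes_at S (Suc k)) + 2 * ?H + card (near_empty_at S k)"
    by (simp add: sum.distrib sum_distrib_left[symmetric] card_boxes_at_Suc[OF wf]
        near_empty_at_def Collect_conj_eq Int_commute)
  finally show "2 * card ?B \<le>
      card (boxes_at S (Suc k)) + 2 * card (pieces_at S k) + card (near_empty_at S k)"
    using card_piece_boxes_at[of S k] by linarith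
  have "card ?B = (\<Sum>i\<in>?B. 1)"
    by simp
  also have "\<dots> \<le> (\<Sum>i\<in>?B. card (children S i) + of_bool (has_piece S i))"
    using card_children_lower(2)[OF used] by (intro sum_mono) (simp add: boxes_at_def)
  also have "\<dots> = card (boxes_at S (Suc k)) + ?H"
    by (simp add: sum.distrib card_boxes_at_Suc[OF wf] Collect_conj_eq Int_commute)
  finally show "card ?B \<le> card (boxes_at S (Suc k)) + card (pieces_at S k)"
    using card_piece_boxes_at[of S k] by linarith
qed

lemma card_lists_trits: "card {T :: int list. set T \<subseteq> {-1, 0, 1} \<and> length T = n} = 3 ^ n"
  using card_lists_length_eq[of "{-1, 0, 1 :: int}" n] by (simp add: numeral_3_eq_3)

lemma card_near_empty_at:
  assumes wf: "forest_wf S" and distinct: "near_empty_types_distinct S"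
  shows "card (near_empty_at S k) \<le> 3 ^ Suc k"
proof -
  define child where "child i = the_elem (children S i)" for i
  have single: "children S i = {child i}" if "i \<in> near_empty_at S k" for i
  proof -
    have "card (children S i) = 1"
      using that by (simp add: near_empty_at_def)
    then obtain c where "children S i = {c}"
      by (rule card_1_singletonE)
    then show ?thesis
      by (simp add: child_def)
  qed
  have "inj_on (\<lambda>i. btype S (child i)) (near_empty_at S k)"
  proof (rule inj_onI)
    fix i i' assume "i \<in> near_empty_at S k" "i' \<in> near_empty_at S k"
      "btype S (child i) = btype S (child i')"
    then show "i = i'"
      using distinct single unfolding near_empty_types_distinct_def by blast
  qed
  moreover have "btype S (child i) \<in> {T. set T \<subseteq> {-1, 0, 1} \<and> length T = Suc k}"
    if i: "i \<in> near_empty_at S k" for i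
  proof -
    have c: "child i \<in> children S i"
      using single[OF i] by simp
    have "length (btype S (child i)) = Suc k"
      using i level_child[OF wf c] by (simp add: level_def near_empty_at_def boxes_at_def)
    moreover have "valid_type (btype S (child i))"
      using forest_wf_valid[OF wf children_less_length[OF c]] .
    ultimately show ?thesis
      by (simp add: valid_type_def)
  qed
  ultimately have
    "card (near_empty_at S k) \<le> card {T :: int list. set T \<subseteq> {-1, 0, 1} \<and> length T = Suc k}"
    by (intro card_inj_on_le) (auto simp: finite_lists_length_eq)
  then show ?thesis
    by (simp add: card_lists_trits)
qed

lemma sum_card_pieces_at:
  assumes "finite A"
  shows "(\<Sum>k\<in>A. card (pieces_at S k)) \<le> length (pcs S)"
proof -
  have "(\<Sum>k\<in>A. card (pieces_at S k)) = card (\<Union>k\<in>A. pieces_at S k)"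
    using assms by (intro card_UN_disjoint[symmetric]) (auto simp: pieces_at_def)
  also have "\<dots> \<le> card {..<length (pcs S)}"
    by (intro card_mono) (auto simp: pieces_at_def)
  finally show ?thesis
    by simp
qed

lemma card_boxes_at_le_length:
  assumes inv: "packer_inv ps S"
  shows "card (boxes_at S K) \<le> length ps"
proof -
  have down: "card (boxes_at S K) \<le>
      card (boxes_at S (K + d)) + (\<Sum>k\<in>{K..<K + d}. card (pieces_at S k))" for d
  proof (induction d)
    case (Suc d)
    then show ?case
      using boxes_at_recurrence(2)[OF inv, of "K + d"] by simp
  qed simp
  obtain d where "\<forall>i < length (boxes S). level S i < K + d"
    using finite_nat_set_iff_bounded[of "level S ` {..<length (boxes S)}"]
    by (metis finite_imageI finite_lessThan image_eqI lessThan_iff trans_less_add2)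
  then have "boxes_at S (K + d) = {}"
    by (auto simp: boxes_at_def)
  then have "card (boxes_at S K) \<le> (\<Sum>k\<in>{K..<K + d}. card (pieces_at S k))"
    using down[of d] by simp
  also have "\<dots> \<le> length (pcs S)"
    by (rule sum_card_pieces_at) simp
  also have "length (pcs S) = length ps"
    using inv by (metis packer_inv_def pieces_in_boxes_def list_all2_lengthD)
  finally show ?thesis .
qed

lemma card_boxes_at_0_le:
  assumes inv: "packer_inv ps S"
  shows "real (card (boxes_at S 0)) \<le> real (card (boxes_at S K)) / 2 ^ K +
    (\<Sum>k<K. real (card (pieces_at S k)) / 2 ^ k + real (card (near_empty_at S k)) / 2 ^ Suc k)"
proof (induction K)
  case (Suc K)
  have "2 * real (card (boxes_at S K)) \<le>
      real (card (boxes_at S (Suc K))) + 2 * real (card (pieces_at S K))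
      + real (card (near_empty_at S K))"
    using boxes_at_recurrence(1)[OF inv, of K] by linarith
  then have "real (card (boxes_at S K)) / 2 ^ K \<le> real (card (boxes_at S (Suc K))) / 2 ^ Suc K +
      (real (card (pieces_at S K)) / 2 ^ K + real (card (near_empty_at S K)) / 2 ^ Suc K)"
    by (simp add: field_simps)
  with Suc show ?case
    by simp
qed simp

lemma area_transl: "area (transl v P) = area P"
  unfolding area_def transl_def by (rule measure_translation)

lemma piece_in_box_area:
  assumes "piece_in_box S P q"
  shows "area (fst q) = area P" "1 / 3 ^ level S (snd q) \<le> 3 * area (fst q)"
proof -
  show area: "area (fst q) = area P"
    using assms area_transl by (auto simp: piece_in_box_def)
  have "2 / 3 ^ level S (snd q) \<le> 6 * area P"
    using assms by (simp add: piece_in_box_def area_box_type level_def)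
  then show "1 / 3 ^ level S (snd q) \<le> 3 * area (fst q)"
    by (simp add: area)
qed

lemma sum_area_pcs:
  assumes "pieces_in_boxes ps S"
  shows "sum_list (map (\<lambda>q. area (fst q)) (pcs S)) = sum_list (map area ps)"
proof -
  have "list_all2 (\<lambda>P q. area P = area (fst q)) ps (pcs S)"
    using assms piece_in_box_area(1) unfolding pieces_in_boxes_def
    by (auto elim: list_all2_mono)
  then have "map area ps = map (\<lambda>q. area (fst q)) (pcs S)"
    by (auto simp: list_all2_conv_all_nth intro: nth_equalityI)
  then show ?thesis
    by simp
qed

lemma sum_pieces_at_le_area:
  assumes inv: "packer_inv ps S"
  shows "(\<Sum>k<K. real (card (pieces_at S k)) / 3 ^ k) \<le> 3 * sum_list (map area ps)"
proof -
  have pieces: "pieces_in_boxes ps S"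
    using inv by (simp add: packer_inv_def)
  define w :: "nat \<Rightarrow> real" where "w n = 1 / 3 ^ level S (snd (pcs S ! n))" for n
  have "(\<Sum>k<K. real (card (pieces_at S k)) / 3 ^ k) = (\<Sum>k<K. \<Sum>n\<in>pieces_at S k. w n)"
    by (intro sum.cong refl) (simp add: w_def pieces_at_def)
  also have "\<dots> = (\<Sum>n\<in>(\<Union>k<K. pieces_at S k). w n)"
    by (rule sum.UNION_disjoint[symmetric]) (auto simp: pieces_at_def)
  also have "\<dots> \<le> (\<Sum>n<length (pcs S). w n)"
    by (rule sum_mono2) (auto simp: pieces_at_def w_def)
  also have "\<dots> \<le> (\<Sum>n<length (pcs S). 3 * area (fst (pcs S ! n)))"
  proof (rule sum_mono)
    fix n assume "n \<in> {..<length (pcs S)}"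
    then have "piece_in_box S (ps ! n) (pcs S ! n)"
      using pieces by (simp add: pieces_in_boxes_def list_all2_nthD2)
    then show "w n \<le> 3 * area (fst (pcs S ! n))"
      unfolding w_def by (rule piece_in_box_area(2))
  qed
  also have "\<dots> = 3 * sum_list (map (\<lambda>q. area (fst q)) (pcs S))"
    by (simp add: sum_list_sum_nth atLeast0LessThan sum_distrib_left)
  finally show ?thesis
    by (simp add: sum_area_pcs[OF pieces])
qed

lemma sum_near_empty_at_le:
  assumes inv: "packer_inv ps S"
  shows "(\<Sum>k<K. real (card (near_empty_at S k)) / 2 ^ Suc k) \<le> 3 * (3 / 2) ^ K"
proof -
  have wf: "forest_wf S" and distinct: "near_empty_types_distinct S"
    using inv by (simp_all add: packer_inv_def box_inv_def)
  have "(\<Sum>k<K. real (card (near_empty_at S k)) / 2 ^ Suc k) \<le> (\<Sum>k<K. (3 / 2) ^ Suc k)"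
  proof (rule sum_mono)
    fix k
    have "real (card (near_empty_at S k)) \<le> 3 ^ Suc k"
      using of_nat_mono[OF card_near_empty_at[OF wf distinct, of k]] by simp
    then show "real (card (near_empty_at S k)) / 2 ^ Suc k \<le> (3 / 2) ^ Suc k"
      by (simp add: power_divide divide_right_mono)
  qed
  also have "\<dots> = 3 * ((3 / 2) ^ K - 1)"
    by (induction K) (simp_all add: algebra_simps)
  finally show ?thesis
    by simp
qed

lemma card_boxes_at_0_bound:
  assumes inv: "packer_inv ps S"
  shows "real (card (boxes_at S 0)) \<le>
    real (length ps) / 2 ^ K + (3 / 2) ^ K * (3 * sum_list (map area ps) + 3)"
proof -
  have "(\<Sum>k<K. real (card (pieces_at S k)) / 2 ^ k) \<le>
      (\<Sum>k<K. (3 / 2) ^ K * (real (card (pieces_at S k)) / 3 ^ k))"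
  proof (rule sum_mono)
    fix k assume "k \<in> {..<K}"
    then have "(3 / 2 :: real) ^ k \<le> (3 / 2) ^ K"
      by (intro power_increasing) simp_all
    then have "(3 / 2) ^ k * (real (card (pieces_at S k)) / 3 ^ k) \<le>
        (3 / 2) ^ K * (real (card (pieces_at S k)) / 3 ^ k)"
      by (rule mult_right_mono) simp
    then show
      "real (card (pieces_at S k)) / 2 ^ k \<le> (3 / 2) ^ K * (real (card (pieces_at S k)) / 3 ^ k)"
      by (simp add: power_divide)
  qed
  also have "\<dots> = (3 / 2) ^ K * (\<Sum>k<K. real (card (pieces_at S k)) / 3 ^ k)"
    by (rule sum_distrib_left[symmetric])
  also have "\<dots> \<le> (3 / 2) ^ K * (3 * sum_list (map area ps))"
    by (rule mult_left_mono[OF sum_pieces_at_le_area[OF inv]]) simp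
  finally have
    "(\<Sum>k<K. real (card (pieces_at S k)) / 2 ^ k) \<le> (3 / 2) ^ K * (3 * sum_list (map area ps))" .
  moreover have "real (card (boxes_at S K)) / 2 ^ K \<le> real (length ps) / 2 ^ K"
    using card_boxes_at_le_length[OF inv, of K] by (simp add: divide_right_mono)
  ultimately show ?thesis
    using card_boxes_at_0_le[OF inv, of K] sum_near_empty_at_le[OF inv, of K]
    by (simp add: sum.distrib algebra_simps)
qed

section \<open>Density\<close>

lemma num_basic_le_card_boxes_at_0:
  assumes wf: "forest_wf S"
  shows "num_basic S \<le> card (boxes_at S 0)"
proof -
  have "num_basic S = card {i. i < length (boxes S) \<and> bparent S i = None}"
    unfolding num_basic_def bparent_def by (rule length_filter_conv_card)
  also have "\<dots> \<le> card (boxes_at S 0)"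
    using forest_wf_root[OF wf] by (intro card_mono) (auto simp: boxes_at_def level_def)
  finally show ?thesis .
qed

lemma placed_piece:
  assumes inv: "packer_inv ps S" and hpar: "\<forall>P\<in>set ps. is_hpar1 P" and Q: "Q \<in> set (placed S)"
  shows "Q \<subseteq> {p. 0 \<le> fst p \<and> fst p \<le> 2 * real (num_basic S)}"
    "\<exists>z w. 0 < w \<and> z \<in> Q \<and> z + (w, 0) \<in> Q"
proof -
  have pieces: "pieces_in_boxes ps S"
    using inv by (simp add: packer_inv_def)
  obtain i where q: "(Q, i) \<in> set (pcs S)"
    using Q by (auto simp: placed_def)
  obtain P where P: "P \<in> set ps" "piece_in_box S P (Q, i)"
    by (rule pieces_in_boxesD[OF pieces q])
  then show "Q \<subseteq> {p. 0 \<le> fst p \<and> fst p \<le> 2 * real (num_basic S)}"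
    using inv by (auto simp: piece_in_box_def packer_inv_def box_inv_def boxes_in_prefix_def)
  obtain a b w s where w: "0 < w" and "P = hpar_at a b w s"
    using hpar P(1) by (auto simp: is_hpar1_iff)
  then have "(a, b) \<in> P" "(a, b) + (w, 0) \<in> P"
    by (simp_all add: hpar_at_def)
  moreover obtain v where "Q = transl v P"
    using P(2) by (auto simp: piece_in_box_def)
  ultimately have "v + (a, b) \<in> Q" "v + (a, b) + (w, 0) \<in> Q"
    by (auto simp: transl_def add.assoc)
  with w show "\<exists>z w. 0 < w \<and> z \<in> Q \<and> z + (w, 0) \<in> Q"
    by blast
qed

lemma right_end_bounds:
  fixes Q :: "(real \<times> real) set"
  assumes "Q \<subseteq> {p. 0 \<le> fst p \<and> fst p \<le> M}" "0 < w" "z \<in> Q" "z + (w, 0) \<in> Q"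
  shows "0 < (SUP p\<in>Q. fst p)" "(SUP p\<in>Q. fst p) \<le> M"
proof -
  have "bdd_above (fst ` Q)"
    using assms(1) by (intro bdd_aboveI[of _ M]) auto
  then have "fst (z + (w, 0)) \<le> (SUP p\<in>Q. fst p)"
    using assms(4) by (rule cSUP_upper2) simp
  moreover have "0 \<le> fst z"
    using assms(1,3) by auto
  ultimately show "0 < (SUP p\<in>Q. fst p)"
    using assms(2) by simp
  show "(SUP p\<in>Q. fst p) \<le> M"
    using assms(1,3) by (intro cSUP_least) auto
qed

lemma occ_right_bounds:
  assumes inv: "packer_inv ps S" and ne: "ps \<noteq> []" and hpar: "\<forall>P\<in>set ps. is_hpar1 P"
  shows "0 < occ_right S" "occ_right S \<le> 2 * real (num_basic S)"
proof -
  let ?ends = "(\<lambda>Q. SUP p\<in>Q. fst p) ` set (placed S)"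
  have ends: "0 < e \<and> e \<le> 2 * real (num_basic S)" if e: "e \<in> ?ends" for e
  proof -
    obtain Q where Q: "Q \<in> set (placed S)" "e = (SUP p\<in>Q. fst p)"
      using e by blast
    obtain z w where "0 < w" "z \<in> Q" "z + (w, 0) \<in> Q"
      using placed_piece(2)[OF inv hpar Q(1)] by blast
    then show ?thesis
      using right_end_bounds[OF placed_piece(1)[OF inv hpar Q(1)]] Q(2) by simp
  qed
  have "length (pcs S) = length ps"
    using inv by (metis packer_inv_def pieces_in_boxes_def list_all2_lengthD)
  then obtain e where e: "e \<in> ?ends"
    using ne by (cases "pcs S") (auto simp: placed_def)
  have "e \<le> occ_right S"
    unfolding occ_right_def using e by (intro Max_ge) simp_all
  then show "0 < occ_right S"
    using ends[OF e] by linarith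
  show "occ_right S \<le> 2 * real (num_basic S)"
    unfolding occ_right_def using e ends by (intro Max.boundedI) auto
qed

lemma pack_density_eq:
  assumes inv: "packer_inv ps S" and "0 \<le> occ_right S"
  shows "pack_density S = sum_list (map area ps) / occ_right S"
proof -
  have "occupied S = hpar 0 (occ_right S) 0"
    by (auto simp: occupied_def hpar_def)
  then have "area (occupied S) = occ_right S"
    using area_hpar[OF assms(2)] by simp
  moreover have "sum_list (map area (placed S)) = sum_list (map area ps)"
    using inv sum_area_pcs by (simp add: placed_def packer_inv_def comp_def)
  ultimately show ?thesis
    by (simp add: pack_density_def)
qed

lemma ceiling_log2_bounds:
  fixes n :: nat
  assumes "1 \<le> n"
  defines "K \<equiv> nat \<lceil>log 2 n\<rceil>"
  shows "real n \<le> 2 ^ K" "(3 / 2 :: real) ^ K \<le> 3 / 2 * n powr (log 2 3 - 1)"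
proof -
  have "0 \<le> log 2 n"
    using assms(1) by simp
  then have K: "log 2 n \<le> real K" "real K \<le> log 2 n + 1"
    unfolding K_def by linarith+
  have "real n = 2 powr log 2 n"
    using assms(1) by simp
  also have "\<dots> \<le> 2 ^ K"
    using K(1) by (simp add: powr_realpow[symmetric])
  finally show "real n \<le> 2 ^ K" .
  have "(3 / 2 :: real) ^ K \<le> (3 / 2) powr (log 2 n + 1)"
    using K(2) by (simp add: powr_realpow[symmetric])
  also have "\<dots> = 3 / 2 * (3 / 2) powr log 2 n"
    by (simp add: powr_add)
  also have "(3 / 2 :: real) powr log 2 n = n powr log 2 (3 / 2)"
    using assms(1) by (simp add: powr_def log_def field_simps)
  also have "log 2 (3 / 2) = log 2 3 - 1"
    by (simp add: log_divide)
  finally show "(3 / 2 :: real) ^ K \<le> 3 / 2 * n powr (log 2 3 - 1)" .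
qed

lemma pack_density_lower_bound:
  assumes packs: "packs ps S" and n: "2 \<le> length ps" and hpar: "\<forall>P\<in>set ps. is_hpar1 P"
    and area: "1 \<le> sum_list (map area ps)"
  shows "1 / (20 * real (length ps) powr (log 2 3 - 1)) \<le> pack_density S"
proof -
  define A where "A = sum_list (map area ps)"
  define x where "x = real (length ps) powr (log 2 3 - 1)"
  define K where "K = nat \<lceil>log 2 (length ps)\<rceil>"
  have inv: "packer_inv ps S"
    using packs by (rule packs_packer_inv)
  have "1 \<le> A" "1 \<le> x"
    using area n by (simp_all add: A_def x_def ge_one_powr_ge_zero)
  then have Ax: "1 \<le> A * x" "x \<le> A * x"
    using mult_mono[of 1 A 1 x] mult_right_mono[of 1 A x] by simp_all
  have R: "0 < occ_right S" "occ_right S \<le> 2 * real (num_basic S)"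
    using occ_right_bounds[OF inv _ hpar] n by force+
  have "real (num_basic S) \<le> real (card (boxes_at S 0))"
    using inv num_basic_le_card_boxes_at_0 by (simp add: packer_inv_def box_inv_def)
  also have "\<dots> \<le> real (length ps) / 2 ^ K + (3 / 2) ^ K * (3 * A + 3)"
    unfolding A_def by (rule card_boxes_at_0_bound[OF inv])
  also have "\<dots> \<le> 1 + 3 / 2 * x * (3 * A + 3)"
    using ceiling_log2_bounds[of "length ps"] n \<open>1 \<le> A\<close>
    by (intro add_mono mult_right_mono) (simp_all add: K_def x_def)
  also have "\<dots> = 1 + 9 / 2 * (A * x) + 9 / 2 * x"
    by (simp add: algebra_simps)
  also have "\<dots> \<le> 10 * (A * x)"
    using Ax by linarith
  finally have "occ_right S \<le> 20 * (A * x)"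
    using R(2) by linarith
  then have "A / (20 * (A * x)) \<le> A / occ_right S"
    using R(1) \<open>1 \<le> A\<close> by (intro divide_left_mono) simp_all
  moreover have "A / (20 * (A * x)) = 1 / (20 * x)"
    using \<open>1 \<le> A\<close> by simp
  moreover have "pack_density S = A / occ_right S"
    using pack_density_eq[OF inv] R(1) by (simp add: A_def)
  ultimately show ?thesis
    by (simp add: x_def)
qed

theorem lemma18:
  shows "\<exists>c > 0. \<exists>N. \<forall>n \<ge> N. \<forall>ps S.
           length ps = n \<longrightarrow>
           (\<forall>P \<in> set ps. is_hpar1 P \<and> width P \<le> 1) \<longrightarrow>
           sum_list (map area ps) \<ge> 1 \<longrightarrow>
           packs ps S \<longrightarrow>
           pack_density S \<ge> c * real n powr (1 - log 2 3) / log 2 (real n)"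
proof (intro exI[of _ "1 / 20"] conjI allI impI exI[of _ "2 :: nat"])
  fix n :: nat and ps S
  assume n: "2 \<le> n" and len: "length ps = n"
    and pieces: "\<forall>P \<in> set ps. is_hpar1 P \<and> width P \<le> 1"
    and area: "1 \<le> sum_list (map area ps)" and packs: "packs ps S"
  have "1 \<le> log 2 (real n)"
    using n by simp
  then have "1 / 20 * real n powr (1 - log 2 3) / log 2 (real n) \<le>
      1 / 20 * real n powr (1 - log 2 3) / 1"
    by (intro divide_left_mono) simp_all
  also have "\<dots> = 1 / (20 * real n powr (log 2 3 - 1))"
    using n by (simp add: powr_minus_divide[symmetric])
  also have "\<dots> \<le> pack_density S"
    using pack_density_lower_bound[OF packs] n len pieces area by simp
  finally show "1 / 20 * real n powr (1 - log 2 3) / log 2 (real n) \<le> pack_density S" .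
qed simp

end
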